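(* Let $L\in\mathbb{Z}_{>0}$, let $\mathcal{Z}(\lambda_1,\dots,\lambda_L)=\langle\bar 0|\mathcal{B}(\lambda_1)\cdots\mathcal{B}(\lambda_L)|0\rangle$ be the partition function of the six-vertex model with one reflecting end and domain-wall boundaries (see context), and let $\bar{\mathcal{Z}}(x_1,\dots,x_L)=\mathcal{Z}(\lambda_1,\dots,\lambda_L)\prod_{i=1}^L x_i^{L}$ with $x_i=e^{2\lambda_i}$. Then, in the limit where all $x_i\to\infty$, \[ \bar{\mathcal{Z}}\sim\frac{q^{\frac{L(L-1)}{2}}}{2^{L(2L+1)}}(q-q^{-1})^L\,[L!]_{q^2}\prod_{i=1}^{L}\big(t\,y_i^{-\frac12}-t^{-1}y_i^{\frac12}\big)\,x_i^{2L}, \] where $q=e^{\gamma}$, $t=e^{h}$, $y_i=e^{2\mu_i}$ and $[n!]_{q^2}=\prod_{k=1}^{n}(1+q^2+\dots+q^{2(k-1)})$.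
   Context: Parameters $\gamma,h,\mu_1,\dots,\mu_L\in\mathbb{C}$. Set $a(\lambda)=\sinh(\lambda+\gamma)$, $b(\lambda)=\sinh(\lambda)$, $c(\lambda)=\sinh(\gamma)$. The $R$-matrix $\mathcal{R}(\lambda)\in\mathrm{End}(\mathbb{C}^2\otimes\mathbb{C}^2)$ is, in the basis $e_1\otimes e_1,e_1\otimes e_2,e_2\otimes e_1,e_2\otimes e_2$, the matrix with rows $(a,0,0,0)$, $(0,b,c,0)$, $(0,c,b,0)$, $(0,0,0,a)$ evaluated at $\lambda$. Let $\mathbb{V}_0\cong\mathbb{C}^2$ and $\mathbb{V}_{\mathcal{Q}}=(\mathbb{C}^2)^{\otimes L}$; $\mathcal{R}_{0j}$ acts on $\mathbb{V}_0$ and the $j$-th factor of $\mathbb{V}_{\mathcal{Q}}$. Define $\tau(\lambda)=\mathcal{R}_{0L}(\lambda-\mu_L)\cdots\mathcal{R}_{01}(\lambda-\mu_1)$, $\bar\tau(\lambda)=\mathcal{R}_{01}(\lambda+\mu_1)\cdots\mathcal{R}_{0L}(\lambda+\mu_L)$, $\mathcal{K}(\lambda)=\mathrm{diag}(\sinh(h+\lambda),\sinh(h-\lambda))$ on $\mathbb{V}_0$, and $\mathcal{T}(\lambda)=\tau(\lambda)\mathcal{K}(\lambda)\bar\tau(\lambda)=\begin{pmatrix}\mathcal{A}(\lambda)&\mathcal{B}(\lambda)\\ \mathcal{C}(\lambda)&\mathcal{D}(\lambda)\end{pmatrix}$ in $\mathbb{V}_0$, with entries in $\mathrm{End}(\mathbb{V}_{\mathcal{Q}})$.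 Let $|0\rangle=e_1^{\otimes L}$ and $\langle\bar 0|$ the transpose of $e_2^{\otimes L}$, $e_1=(1,0)^T$, $e_2=(0,1)^T$. The symbol $\sim$ means that the ratio of the two sides tends to $1$ in the stated limit. *)

theory Defs
  imports Complex_Main
begin

text \<open>The basis vector e1 of C^2 is encoded by False, e2 by True.
  A basis state of the quantum space (C^2)^{\<otimes>L} is a bool list of length L;
  position j-1 of the list is the j-th tensor factor (j = 1..L).
  An operator on the quantum space is its matrix: P s u = <s| P |u>.
  An operator on V_0 \<otimes> V_Q is stored as its 2x2 block matrix in V_0:
  M a b is the (a,b) block, an operator on V_Q.\<close>

type_synonym qop = "bool list \<Rightarrow> bool list \<Rightarrow> complex"
type_synonym mop = "bool \<Rightarrow> bool \<Rightarrow> qop"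

definition states :: "nat \<Rightarrow> bool list set" where
  "states L = {s. length s = L}"

definition qmult :: "nat \<Rightarrow> qop \<Rightarrow> qop \<Rightarrow> qop" where
  "qmult L P Q = (\<lambda>s u. \<Sum>v\<in>states L. P s v * Q v u)"

definition qid :: qop where
  "qid = (\<lambda>s u. if s = u then 1 else 0)"

definition mmult :: "nat \<Rightarrow> mop \<Rightarrow> mop \<Rightarrow> mop" where
  "mmult L M N = (\<lambda>a b s u. \<Sum>c\<in>(UNIV::bool set). qmult L (M a c) (N c b) s u)"

definition mid :: mop where
  "mid = (\<lambda>a b. if a = b then qid else (\<lambda>_ _. 0))"

text \<open>Entries of the R-matrix: Rent g lam a al b be = R(lam)[(a,al),(b,be)],
  row index a \<otimes> al, column index b \<otimes> be; rows
  (a,0,0,0), (0,b,c,0), (0,c,b,0), (0,0,0,a) in the basis e1e1, e1e2, e2e1, e2e2.\<close>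
definition Rent :: "complex \<Rightarrow> complex \<Rightarrow> bool \<Rightarrow> bool \<Rightarrow> bool \<Rightarrow> bool \<Rightarrow> complex" where
  "Rent g lam a al b be =
     (if a = al \<and> b = be \<and> a = b then sinh (lam + g)
      else if a \<noteq> al \<and> b \<noteq> be then (if a = b then sinh lam else sinh g)
      else 0)"

text \<open>R_{0j}(lam): acts on V_0 and the j-th factor (list position j-1) of V_Q.\<close>
definition Rop :: "complex \<Rightarrow> complex \<Rightarrow> nat \<Rightarrow> mop" where
  "Rop g lam j = (\<lambda>a b s u.
     if length s = length u \<and> (\<forall>k<length s. k \<noteq> j - 1 \<longrightarrow> s ! k = u ! k)
     then Rent g lam a (s ! (j - 1)) b (u ! (j - 1)) else 0)"

fun tauA :: "complex \<Rightarrow> nat \<Rightarrow> (nat \<Rightarrow> complex) \<Rightarrow> complex \<Rightarrow> nat \<Rightarrow> mop" where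
  "tauA g L mu lam 0 = mid"
| "tauA g L mu lam (Suc k) = mmult L (Rop g (lam - mu (Suc k)) (Suc k)) (tauA g L mu lam k)"

fun tbarA :: "complex \<Rightarrow> nat \<Rightarrow> (nat \<Rightarrow> complex) \<Rightarrow> complex \<Rightarrow> nat \<Rightarrow> mop" where
  "tbarA g L mu lam 0 = mid"
| "tbarA g L mu lam (Suc k) = mmult L (tbarA g L mu lam k) (Rop g (lam + mu (Suc k)) (Suc k))"

definition tau :: "complex \<Rightarrow> nat \<Rightarrow> (nat \<Rightarrow> complex) \<Rightarrow> complex \<Rightarrow> mop" where
  "tau g L mu lam = tauA g L mu lam L"

definition tbar :: "complex \<Rightarrow> nat \<Rightarrow> (nat \<Rightarrow> complex) \<Rightarrow> complex \<Rightarrow> mop" where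
  "tbar g L mu lam = tbarA g L mu lam L"

definition Kop :: "complex \<Rightarrow> complex \<Rightarrow> mop" where
  "Kop h lam = (\<lambda>a b s u. if a = b then (if a then sinh (h - lam) else sinh (h + lam)) * qid s u
                          else 0)"

definition Tmon :: "complex \<Rightarrow> complex \<Rightarrow> nat \<Rightarrow> (nat \<Rightarrow> complex) \<Rightarrow> complex \<Rightarrow> mop" where
  "Tmon g h L mu lam = mmult L (mmult L (tau g L mu lam) (Kop h lam)) (tbar g L mu lam)"

definition Bop :: "complex \<Rightarrow> complex \<Rightarrow> nat \<Rightarrow> (nat \<Rightarrow> complex) \<Rightarrow> complex \<Rightarrow> qop" where
  "Bop g h L mu lam = Tmon g h L mu lam False True"

fun Bprod :: "complex \<Rightarrow> complex \<Rightarrow> nat \<Rightarrow> (nat \<Rightarrow> complex) \<Rightarrow> (nat \<Rightarrow> complex) \<Rightarrow> nat \<Rightarrow> qop" where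
  "Bprod g h L mu lams 0 = qid"
| "Bprod g h L mu lams (Suc k) = qmult L (Bprod g h L mu lams k) (Bop g h L mu (lams (Suc k)))"

text \<open>Z(lam_1..lam_L) = <0bar| B(lam_1)\<cdots>B(lam_L) |0>, |0> = e1^L, <0bar| = (e2^L)^T.\<close>
definition Zpf :: "complex \<Rightarrow> complex \<Rightarrow> nat \<Rightarrow> (nat \<Rightarrow> complex) \<Rightarrow> (nat \<Rightarrow> complex) \<Rightarrow> complex" where
  "Zpf g h L mu lams = Bprod g h L mu lams L (replicate L True) (replicate L False)"

definition Zbar :: "complex \<Rightarrow> complex \<Rightarrow> nat \<Rightarrow> (nat \<Rightarrow> complex) \<Rightarrow> (nat \<Rightarrow> complex) \<Rightarrow> complex" where
  "Zbar g h L mu lams = Zpf g h L mu lams * (\<Prod>i=1..L. exp (2 * lams i) ^ L)"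

definition qfact :: "complex \<Rightarrow> nat \<Rightarrow> complex" where
  "qfact p n = (\<Prod>k=1..n. \<Sum>j<k. p ^ j)"

end

theory Submission
  imports Defs
begin

text \<open>
  As Re l tends to infinity, the normalised R-matrix 2 e^(-l) R(l + \<nu>) tends to a diagonal
  matrix with entries e^\<nu> and e^(\<nu> + \<gamma>), and its correction of order e^(-l) comes only
  from the entry c = sinh \<gamma>; similarly 2 e^(-l) K(l) tends to a diagonal matrix. Hence the
  leading term of the double-row monodromy, normalised by (2 e^(-l))^(2L+1), is diagonal in V_0,
  so its off-diagonal entry B(l) is of order e^(2Ll) = x^L, and B(l) / x^L tends to a first-order
  operator that raises exactly one site i from e_1 to e_2, with a weight depending only on i and
  on the number of sites left of i still in state e_1. Therefore Zbar / \<Prod> x_i^(2L) tends to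
  the domain-wall matrix element of the L-th power of this operator: a sum over the orders in
  which the sites are raised, which factorises as \<Prod>_i \<Sum>_(m \<le> i) W(i, m). Summing the
  geometric series in m produces the q-factorial and the stated constant.
\<close>

section \<open>Expansions as Re l tends to infinity\<close>

definition Re_at_top :: "complex filter" where
  "Re_at_top = filtercomap Re at_top"

lemma tendsto_exp_neg_Re_at_top: "((\<lambda>l::complex. exp (- l)) \<longlongrightarrow> 0) Re_at_top"
proof -
  have "((\<lambda>x::real. exp (- x)) \<longlongrightarrow> 0) at_top"
    using exp_at_bot filterlim_uminus_at_bot_at_top filterlim_compose by blast
  then have "((\<lambda>l. exp (- Re l)) \<longlongrightarrow> 0) Re_at_top"
    unfolding Re_at_top_def using filterlim_compose filterlim_filtercomap by blast
  then show ?thesis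
    by (subst tendsto_norm_zero_iff[symmetric]) simp
qed

definition asymp_expansion :: "(complex \<Rightarrow> complex) \<Rightarrow> complex \<Rightarrow> complex \<Rightarrow> bool" where
  "asymp_expansion f c0 c1 \<longleftrightarrow>
     (f \<longlongrightarrow> c0) Re_at_top \<and> ((\<lambda>l. exp l * (f l - c0)) \<longlongrightarrow> c1) Re_at_top"

lemma asymp_expansion_const: "asymp_expansion (\<lambda>_. c) c 0"
  unfolding asymp_expansion_def by simp

lemma asymp_expansion_mult:
  assumes f: "asymp_expansion f a0 a1" and g: "asymp_expansion g b0 b1"
  shows "asymp_expansion (\<lambda>l. f l * g l) (a0 * b0) (a1 * b0 + a0 * b1)"
proof -
  have "exp l * (f l * g l - a0 * b0) = exp l * (f l - a0) * g l + a0 * (exp l * (g l - b0))" for l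
    by (simp add: algebra_simps)
  then show ?thesis
    using f g unfolding asymp_expansion_def by (auto intro!: tendsto_intros)
qed

lemma asymp_expansion_sum:
  assumes "\<And>i. i \<in> I \<Longrightarrow> asymp_expansion (f i) (a0 i) (a1 i)"
  shows "asymp_expansion (\<lambda>l. \<Sum>i\<in>I. f i l) (\<Sum>i\<in>I. a0 i) (\<Sum>i\<in>I. a1 i)"
proof -
  have "exp l * ((\<Sum>i\<in>I. f i l) - (\<Sum>i\<in>I. a0 i)) = (\<Sum>i\<in>I. exp l * (f i l - a0 i))" for l
    by (simp add: right_diff_distrib sum_subtractf sum_distrib_left)
  then show ?thesis
    using assms unfolding asymp_expansion_def by (auto intro!: tendsto_sum)
qed

lemma asymp_expansion_sinh:
  "asymp_expansion (\<lambda>l. 2 * exp (- l) * sinh (l + c)) (exp c) 0"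
proof -
  have main: "2 * exp (- l) * sinh (l + c) = exp c - exp (- c) * exp (- l) ^ 2" for l
    by (simp add: sinh_field_def exp_add exp_diff exp_minus field_simps power2_eq_square)
  have sub: "exp l * (2 * exp (- l) * sinh (l + c) - exp c) = - exp (- c) * exp (- l)" for l
    unfolding main by (simp add: exp_minus field_simps power2_eq_square)
  have "((\<lambda>l. exp c - exp (- c) * exp (- l) ^ 2) \<longlongrightarrow> exp c - exp (- c) * 0 ^ 2) Re_at_top"
    and "((\<lambda>l. - exp (- c) * exp (- l)) \<longlongrightarrow> - exp (- c) * 0) Re_at_top"
    by (intro tendsto_intros tendsto_exp_neg_Re_at_top)+
  then show ?thesis
    unfolding asymp_expansion_def sub unfolding main by simp
qed

lemma asymp_expansion_decay: "asymp_expansion (\<lambda>l. 2 * exp (- l) * c) 0 (2 * c)"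
proof -
  have "((\<lambda>l. 2 * exp (- l) * c) \<longlongrightarrow> 2 * 0 * c) Re_at_top"
    by (intro tendsto_intros tendsto_exp_neg_Re_at_top)
  moreover have "exp l * (2 * exp (- l) * c - 0) = 2 * c" for l
    by (simp add: exp_minus field_simps)
  ultimately show ?thesis
    unfolding asymp_expansion_def by (simp only: tendsto_const) simp
qed

lemma asymp_expansion_mult_const:
  "asymp_expansion f a0 a1 \<Longrightarrow> asymp_expansion (\<lambda>l. f l * d) (a0 * d) (a1 * d)"
  using asymp_expansion_mult[OF _ asymp_expansion_const] by fastforce

definition mscale :: "complex \<Rightarrow> mop \<Rightarrow> mop" where
  "mscale c M = (\<lambda>a b s u. c * M a b s u)"

definition madd :: "mop \<Rightarrow> mop \<Rightarrow> mop" where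
  "madd M N = (\<lambda>a b s u. M a b s u + N a b s u)"

definition mzero :: mop where
  "mzero = (\<lambda>a b s u. 0)"

lemma mmult_mscale: "mmult L (mscale c A) (mscale d B) = mscale (c * d) (mmult L A B)"
  unfolding mmult_def qmult_def mscale_def by (simp add: sum_distrib_left mult_ac)

lemma mscale_1: "mscale 1 M = M"
  unfolding mscale_def by simp

lemma mmult_mzero_right: "mmult L A mzero = mzero"
  unfolding mmult_def qmult_def mzero_def by simp

lemma madd_mzero_right: "madd M mzero = M"
  unfolding madd_def mzero_def by simp

definition mop_expansion :: "(complex \<Rightarrow> mop) \<Rightarrow> mop \<Rightarrow> mop \<Rightarrow> bool" where
  "mop_expansion A A0 A1 \<longleftrightarrow>
     (\<forall>a b s u. asymp_expansion (\<lambda>l. A l a b s u) (A0 a b s u) (A1 a b s u))"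

lemma mop_expansion_const: "mop_expansion (\<lambda>_. M) M mzero"
  unfolding mop_expansion_def mzero_def by (simp add: asymp_expansion_const)

lemma mop_expansion_mmult:
  assumes "mop_expansion A A0 A1" and "mop_expansion B B0 B1"
  shows "mop_expansion (\<lambda>l. mmult L (A l) (B l)) (mmult L A0 B0)
           (madd (mmult L A1 B0) (mmult L A0 B1))"
  unfolding mop_expansion_def
proof (intro allI)
  fix a b s u
  have "asymp_expansion (\<lambda>l. \<Sum>c\<in>UNIV. \<Sum>v\<in>states L. A l a c s v * B l c b v u)
      (\<Sum>c\<in>UNIV. \<Sum>v\<in>states L. A0 a c s v * B0 c b v u)
      (\<Sum>c\<in>UNIV. \<Sum>v\<in>states L. A1 a c s v * B0 c b v u + A0 a c s v * B1 c b v u)"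
    using assms unfolding mop_expansion_def
    by (intro asymp_expansion_sum asymp_expansion_mult) auto
  then show "asymp_expansion (\<lambda>l. mmult L (A l) (B l) a b s u) (mmult L A0 B0 a b s u)
      (madd (mmult L A1 B0) (mmult L A0 B1) a b s u)"
    by (simp add: mmult_def qmult_def madd_def sum.distrib)
qed

section \<open>Leading and first-order parts of the monodromy\<close>

definition lead_weight :: "complex \<Rightarrow> complex \<Rightarrow> bool \<Rightarrow> bool \<Rightarrow> complex" where
  "lead_weight g \<nu> a x = exp \<nu> * (if x = a then exp g else 1)"

text \<open>At first order only the entry c = sinh \<gamma> of the R-matrix survives.\<close>

definition Rlead :: "complex \<Rightarrow> complex \<Rightarrow> nat \<Rightarrow> mop" where
  "Rlead g \<nu> j = (\<lambda>a b s u. if a = b \<and> s = u then lead_weight g \<nu> a (s ! (j - 1)) else 0)"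

definition Rsub :: "complex \<Rightarrow> nat \<Rightarrow> mop" where
  "Rsub g j = (\<lambda>a b s u.
     if a \<noteq> b \<and> j - 1 < length u \<and> u ! (j - 1) = a \<and> s = u[j - 1 := b] then 2 * sinh g else 0)"

definition Klead :: "complex \<Rightarrow> mop" where
  "Klead h = (\<lambda>a b s u. if a = b then (if a then - exp (- h) else exp h) * qid s u else 0)"

lemma asymp_expansion_Rent:
  "asymp_expansion (\<lambda>l. 2 * exp (- l) * Rent g (l + \<nu>) a x b y)
     (if a = b \<and> x = y then lead_weight g \<nu> a x else 0)
     (if a \<noteq> b \<and> y = a \<and> x = b then 2 * sinh g else 0)"
proof -
  have shift: "l + \<nu> + g = l + (\<nu> + g)" for l
    by (simp add: add.assoc)
  show ?thesis
    using asymp_expansion_sinh[of "\<nu> + g", unfolded exp_add]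
    by (cases a; cases b; cases x; cases y)
       (simp_all add: Rent_def lead_weight_def shift asymp_expansion_sinh asymp_expansion_decay
         asymp_expansion_const)
qed

lemma mop_expansion_Rop:
  "mop_expansion (\<lambda>l. mscale (2 * exp (- l)) (Rop g (l + \<nu>) j)) (Rlead g \<nu> j) (Rsub g j)"
  unfolding mop_expansion_def
proof (intro allI)
  fix a b s u
  define p where "p = j - 1"
  show "asymp_expansion (\<lambda>l. mscale (2 * exp (- l)) (Rop g (l + \<nu>) j) a b s u)
      (Rlead g \<nu> j a b s u) (Rsub g j a b s u)"
  proof (cases "length s = length u \<and> (\<forall>k<length s. k \<noteq> p \<longrightarrow> s ! k = u ! k)")
    case True
    have same: "s = u \<longleftrightarrow> s ! p = u ! p"
    proof
      assume "s ! p = u ! p"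
      then have "s ! k = u ! k" if "k < length s" for k
        using True that by (cases "k = p") auto
      with True show "s = u"
        by (simp add: list_eq_iff_nth_eq)
    qed simp
    have "p < length u \<and> s = u[p := b] \<longleftrightarrow> p < length u \<and> s ! p = b"
      using True by (auto simp: list_eq_iff_nth_eq nth_list_update split: if_splits)
    moreover have "\<not> p < length u \<Longrightarrow> s ! p = u ! p"
      using True same by (simp add: list_eq_iff_nth_eq)
    ultimately have sub: "Rsub g j a b s u = (if a \<noteq> b \<and> u ! p = a \<and> s ! p = b then 2 * sinh g else 0)"
      by (auto simp: Rsub_def p_def)
    have lead: "Rlead g \<nu> j a b s u = (if a = b \<and> s ! p = u ! p then lead_weight g \<nu> a (s ! p) else 0)"
      using same by (simp add: Rlead_def p_def)
    have "Rop g lam j a b s u = Rent g lam a (s ! p) b (u ! p)" for lam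
      using True by (simp add: Rop_def p_def)
    then show ?thesis
      unfolding mscale_def lead sub by (simp only: asymp_expansion_Rent)
  next
    case False
    then have "Rop g lam j a b s u = 0" for lam
      unfolding Rop_def p_def by (simp only: if_False)
    moreover have "Rlead g \<nu> j a b s u = 0" "Rsub g j a b s u = 0"
      using False by (auto simp: Rlead_def Rsub_def p_def nth_list_update)
    ultimately show ?thesis
      by (simp add: mscale_def asymp_expansion_const)
  qed
qed

lemma mop_expansion_Kop: "mop_expansion (\<lambda>l. mscale (2 * exp (- l)) (Kop h l)) (Klead h) mzero"
  unfolding mop_expansion_def
proof (intro allI)
  fix a b s u
  have scaled: "asymp_expansion (\<lambda>l. 2 * exp (- l) * sinh (l + c) * d) (exp c * d) 0" for c d
    using asymp_expansion_mult_const[OF asymp_expansion_sinh] by simp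
  have "sinh (h - l) = - sinh (l - h)" for l
    by (metis minus_diff_eq sinh_minus)
  then have minus: "asymp_expansion (\<lambda>l. 2 * exp (- l) * (sinh (h - l) * d)) (- (exp (- h) * d)) 0" for d
    using scaled[of "- h" "- d"] by (simp add: mult.assoc)
  have "sinh (h + l) = sinh (l + h)" for l
    by (simp only: add.commute)
  then have plus: "asymp_expansion (\<lambda>l. 2 * exp (- l) * (sinh (h + l) * d)) (exp h * d) 0" for d
    using scaled[of h d] by (simp add: mult.assoc)
  show "asymp_expansion (\<lambda>l. mscale (2 * exp (- l)) (Kop h l) a b s u) (Klead h a b s u) (mzero a b s u)"
    by (cases a; cases b)
       (simp_all add: mscale_def Kop_def Klead_def mzero_def minus plus asymp_expansion_const)
qed

context
  fixes g h :: complex and L :: nat and mu :: "nat \<Rightarrow> complex"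
begin

fun tau_lead :: "nat \<Rightarrow> mop" where
  "tau_lead 0 = mid"
| "tau_lead (Suc k) = mmult L (Rlead g (- mu (Suc k)) (Suc k)) (tau_lead k)"

fun tau_sub :: "nat \<Rightarrow> mop" where
  "tau_sub 0 = mzero"
| "tau_sub (Suc k) = madd (mmult L (Rsub g (Suc k)) (tau_lead k))
                          (mmult L (Rlead g (- mu (Suc k)) (Suc k)) (tau_sub k))"

fun tbar_lead :: "nat \<Rightarrow> mop" where
  "tbar_lead 0 = mid"
| "tbar_lead (Suc k) = mmult L (tbar_lead k) (Rlead g (mu (Suc k)) (Suc k))"

fun tbar_sub :: "nat \<Rightarrow> mop" where
  "tbar_sub 0 = mzero"
| "tbar_sub (Suc k) = madd (mmult L (tbar_sub k) (Rlead g (mu (Suc k)) (Suc k)))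
                           (mmult L (tbar_lead k) (Rsub g (Suc k)))"

lemma mop_expansion_tauA:
  "mop_expansion (\<lambda>l. mscale ((2 * exp (- l)) ^ k) (tauA g L mu l k)) (tau_lead k) (tau_sub k)"
proof (induction k)
  case 0
  show ?case using mop_expansion_const[of mid] by (simp add: mscale_1)
next
  case (Suc k)
  have "mscale ((2 * exp (- l)) ^ Suc k) (tauA g L mu l (Suc k)) =
      mmult L (mscale (2 * exp (- l)) (Rop g (l + - mu (Suc k)) (Suc k)))
              (mscale ((2 * exp (- l)) ^ k) (tauA g L mu l k))" for l
    by (simp add: mmult_mscale)
  then show ?case
    unfolding tau_lead.simps tau_sub.simps by (simp only: mop_expansion_mmult[OF mop_expansion_Rop Suc.IH])
qed

lemma mop_expansion_tbarA:
  "mop_expansion (\<lambda>l. mscale ((2 * exp (- l)) ^ k) (tbarA g L mu l k)) (tbar_lead k) (tbar_sub k)"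
proof (induction k)
  case 0
  show ?case using mop_expansion_const[of mid] by (simp add: mscale_1)
next
  case (Suc k)
  have "mscale ((2 * exp (- l)) ^ Suc k) (tbarA g L mu l (Suc k)) =
      mmult L (mscale ((2 * exp (- l)) ^ k) (tbarA g L mu l k))
              (mscale (2 * exp (- l)) (Rop g (l + mu (Suc k)) (Suc k)))" for l
    by (simp add: mmult_mscale mult.commute)
  then show ?case
    unfolding tbar_lead.simps tbar_sub.simps by (simp only: mop_expansion_mmult[OF Suc.IH mop_expansion_Rop])
qed

definition T_lead :: mop where
  "T_lead = mmult L (mmult L (tau_lead L) (Klead h)) (tbar_lead L)"

definition T_sub :: mop where
  "T_sub = madd (mmult L (mmult L (tau_sub L) (Klead h)) (tbar_lead L))
                (mmult L (mmult L (tau_lead L) (Klead h)) (tbar_sub L))"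

lemma mop_expansion_Tmon:
  "mop_expansion (\<lambda>l. mscale ((2 * exp (- l)) ^ (2 * L + 1)) (Tmon g h L mu l)) T_lead T_sub"
proof -
  have "(x::complex) ^ (L + 1 + L) = x ^ L * x * x ^ L" for x
    by (simp only: power_add mult_2 power_one_right)
  moreover have "2 * L + 1 = L + 1 + L"
    by simp
  ultimately have "mscale ((2 * exp (- l)) ^ (2 * L + 1)) (Tmon g h L mu l) =
      mmult L (mmult L (mscale ((2 * exp (- l)) ^ L) (tauA g L mu l L))
                       (mscale (2 * exp (- l)) (Kop h l)))
              (mscale ((2 * exp (- l)) ^ L) (tbarA g L mu l L))" for l
    by (simp only: mmult_mscale Tmon_def tau_def tbar_def)
  then show ?thesis
    using mop_expansion_mmult[OF mop_expansion_mmult[OF mop_expansion_tauA mop_expansion_Kop]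
        mop_expansion_tbarA]
    by (simp only: T_lead_def T_sub_def mmult_mzero_right madd_mzero_right)
qed

end

section \<open>Limit of the normalised B-operators\<close>

definition block_diagonal :: "mop \<Rightarrow> bool" where
  "block_diagonal M \<longleftrightarrow> (\<forall>a b s u. a \<noteq> b \<longrightarrow> M a b s u = 0)"

lemma block_diagonal_mmult:
  assumes "block_diagonal A" and "block_diagonal B"
  shows "block_diagonal (mmult L A B)"
  unfolding block_diagonal_def mmult_def qmult_def
proof (intro allI impI)
  fix a b :: bool and s u
  assume "a \<noteq> b"
  then have "(\<Sum>v\<in>states L. A a c s v * B c b v u) = 0" for c
    using assms unfolding block_diagonal_def by (cases "c = a") auto
  then show "(\<Sum>c\<in>UNIV. \<Sum>v\<in>states L. A a c s v * B c b v u) = 0"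
    by simp
qed

lemma block_diagonal_mid: "block_diagonal mid"
  unfolding block_diagonal_def mid_def by simp

lemma block_diagonal_Rlead: "block_diagonal (Rlead g \<nu> j)"
  unfolding block_diagonal_def Rlead_def by simp

lemma block_diagonal_Klead: "block_diagonal (Klead h)"
  unfolding block_diagonal_def Klead_def by simp

lemma T_lead_off_diagonal: "T_lead g h L mu False True s u = 0"
proof -
  have "block_diagonal (tau_lead g L mu k)" "block_diagonal (tbar_lead g L mu k)" for k
    by (induction k) (simp_all add: block_diagonal_mid block_diagonal_mmult block_diagonal_Rlead)
  then have "block_diagonal (T_lead g h L mu)"
    unfolding T_lead_def by (intro block_diagonal_mmult block_diagonal_Klead)
  then show ?thesis
    unfolding block_diagonal_def by blast
qed

definition Bcoeff :: "complex \<Rightarrow> complex \<Rightarrow> nat \<Rightarrow> (nat \<Rightarrow> complex) \<Rightarrow> qop" where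
  "Bcoeff g h L mu = (\<lambda>s u. T_sub g h L mu False True s u / 2 ^ (2 * L + 1))"

lemma tendsto_Bop_normalized:
  "((\<lambda>l. Bop g h L mu l s u / exp (2 * l) ^ L) \<longlongrightarrow> Bcoeff g h L mu s u) Re_at_top"
proof -
  have "((\<lambda>l. exp l * (mscale ((2 * exp (- l)) ^ (2 * L + 1)) (Tmon g h L mu l) False True s u
      - T_lead g h L mu False True s u)) \<longlongrightarrow> T_sub g h L mu False True s u) Re_at_top"
    using mop_expansion_Tmon unfolding mop_expansion_def asymp_expansion_def by blast
  then have "((\<lambda>l. exp l * ((2 * exp (- l)) ^ (2 * L + 1) * Bop g h L mu l s u)) \<longlongrightarrow>
      T_sub g h L mu False True s u) Re_at_top"
    unfolding mscale_def Bop_def T_lead_off_diagonal by simp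
  then have "((\<lambda>l. exp l * ((2 * exp (- l)) ^ (2 * L + 1) * Bop g h L mu l s u) / 2 ^ (2 * L + 1))
      \<longlongrightarrow> Bcoeff g h L mu s u) Re_at_top"
    unfolding Bcoeff_def by (intro tendsto_divide) simp_all
  moreover have "exp l * ((2 * exp (- l)) ^ (2 * L + 1) * z) / 2 ^ (2 * L + 1) = z / exp (2 * l) ^ L"
    for l z :: complex
  proof -
    have "exp l * exp (- l) ^ (2 * L + 1) = exp (- l) ^ (2 * L)"
      by (simp add: exp_minus field_simps)
    moreover have "exp (- l) ^ (2 * L) = 1 / exp (2 * l) ^ L"
      by (simp add: power_mult exp_minus power_inverse divide_inverse exp_double[symmetric])
    ultimately show ?thesis
      by (simp add: power_mult_distrib field_simps)
  qed
  ultimately show ?thesis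
    by simp
qed

definition Re_all_at_top :: "'i set \<Rightarrow> ('i \<Rightarrow> complex) filter" where
  "Re_all_at_top I = (INF M. principal {lams. \<forall>i\<in>I. M \<le> Re (lams i)})"

lemma eventually_Re_all_at_top:
  "eventually P (Re_all_at_top I) \<longleftrightarrow> (\<exists>M. \<forall>lams. (\<forall>i\<in>I. M \<le> Re (lams i)) \<longrightarrow> P lams)"
  unfolding Re_all_at_top_def
proof (subst eventually_INF_base)
  fix a b :: real
  show "\<exists>M\<in>UNIV. principal {lams. \<forall>i\<in>I. M \<le> Re (lams i)} \<le>
      inf (principal {lams. \<forall>i\<in>I. a \<le> Re (lams i)}) (principal {lams. \<forall>i\<in>I. b \<le> Re (lams i)})"
    by (rule bexI[of _ "max a b"]) auto
qed (auto simp: eventually_principal)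

lemma filterlim_Re_all_at_top: "i \<in> I \<Longrightarrow> filterlim (\<lambda>lams. lams i) Re_at_top (Re_all_at_top I)"
  unfolding filterlim_iff Re_at_top_def eventually_filtercomap eventually_at_top_linorder
    eventually_Re_all_at_top
  by (metis order_trans)

fun qpow :: "nat \<Rightarrow> qop \<Rightarrow> nat \<Rightarrow> qop" where
  "qpow L P 0 = qid"
| "qpow L P (Suc k) = qmult L (qpow L P k) P"

lemma tendsto_Bprod_normalized:
  "k \<le> L \<Longrightarrow> ((\<lambda>lams. Bprod g h L mu lams k s u / (\<Prod>i=1..k. exp (2 * lams i) ^ L))
     \<longlongrightarrow> qpow L (Bcoeff g h L mu) k s u) (Re_all_at_top {1..L})"
proof (induction k arbitrary: s u)
  case 0
  then show ?case by simp
next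
  case (Suc k)
  have split: "Bprod g h L mu lams (Suc k) s u / (\<Prod>i=1..Suc k. exp (2 * lams i) ^ L) =
      (\<Sum>v\<in>states L. Bprod g h L mu lams k s v / (\<Prod>i=1..k. exp (2 * lams i) ^ L) *
         (Bop g h L mu (lams (Suc k)) v u / exp (2 * lams (Suc k)) ^ L))" for lams
    by (simp add: qmult_def sum_divide_distrib)
  have last: "((\<lambda>lams. Bop g h L mu (lams (Suc k)) v u / exp (2 * lams (Suc k)) ^ L)
      \<longlongrightarrow> Bcoeff g h L mu v u) (Re_all_at_top {1..L})" for v
    using Suc.prems filterlim_compose[OF tendsto_Bop_normalized filterlim_Re_all_at_top[of "Suc k"]]
    by simp
  show ?case
    unfolding split qpow.simps qmult_def
    by (intro tendsto_sum tendsto_mult Suc.IH last) (use Suc.prems in auto)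
qed

section \<open>The first-order B-operator\<close>

lemma finite_states: "finite (states L)"
proof -
  have "states L = {xs. set xs \<subseteq> UNIV \<and> length xs = L}"
    unfolding states_def by auto
  then show ?thesis
    using finite_lists_length_eq[of "UNIV :: bool set" L] by simp
qed

lemma sum_states_delta:
  "length s = L \<Longrightarrow> (\<Sum>v\<in>states L. if v = s then f v else 0) = (f s :: complex)"
  using finite_states[of L] by (simp add: states_def)

lemma mmult_diag_left:
  assumes "length s = L" and "\<And>c v. length v = L \<Longrightarrow> A a c s v = (if c = a \<and> v = s then d else 0)"
  shows "mmult L A B a b s u = d * B a b s u"
proof -
  have "(\<Sum>v\<in>states L. A a c s v * B c b v u) =
      (\<Sum>v\<in>states L. if v = s then (if c = a then d * B c b v u else 0) else 0)" for c
    by (rule sum.cong) (auto simp: assms(2) states_def)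
  then show ?thesis
    unfolding mmult_def qmult_def using sum_states_delta[OF assms(1)] by (simp add: UNIV_bool)
qed

lemma mmult_diag_right:
  assumes "length u = L" and "\<And>c v. length v = L \<Longrightarrow> B c b v u = (if c = b \<and> v = u then d else 0)"
  shows "mmult L A B a b s u = A a b s u * d"
proof -
  have "(\<Sum>v\<in>states L. A a c s v * B c b v u) =
      (\<Sum>v\<in>states L. if v = u then (if c = b then A a c s v * d else 0) else 0)" for c
    by (rule sum.cong) (auto simp: assms(2) states_def)
  then show ?thesis
    unfolding mmult_def qmult_def using sum_states_delta[OF assms(1)] by (simp add: UNIV_bool)
qed

lemma mmult_Rsub_left:
  assumes "length s = L" and "p < L"
  shows "mmult L (Rsub g (Suc p)) B a b s u =
    (if s ! p \<noteq> a then 2 * sinh g * B (\<not> a) b (s[p := a]) u else 0)"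
proof -
  have flip: "length v = L \<Longrightarrow> v ! p = a \<and> s = v[p := c] \<longleftrightarrow> s ! p = c \<and> v = s[p := a]" for v c
    using assms by (auto simp: list_eq_iff_nth_eq nth_list_update)
  have "(\<Sum>v\<in>states L. Rsub g (Suc p) a c s v * B c b v u) =
      (\<Sum>v\<in>states L. if v = s[p := a] then (if a \<noteq> c \<and> s ! p = c then 2 * sinh g * B c b v u else 0)
         else 0)" for c
    by (rule sum.cong) (use assms flip in \<open>auto simp: Rsub_def states_def\<close>)
  then show ?thesis
    unfolding mmult_def qmult_def using sum_states_delta[of "s[p := a]" L] assms
    by (cases a) (auto simp: UNIV_bool)
qed

lemma mmult_Rsub_right:
  assumes "length u = L" and "p < L"
  shows "mmult L A (Rsub g (Suc p)) a b s u =
    (if u ! p \<noteq> b then A a (\<not> b) s (u[p := b]) * (2 * sinh g) else 0)"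
proof -
  have "(\<Sum>v\<in>states L. A a c s v * Rsub g (Suc p) c b v u) =
      (\<Sum>v\<in>states L. if v = u[p := b] then (if c \<noteq> b \<and> u ! p = c then A a c s v * (2 * sinh g) else 0)
         else 0)" for c
    by (rule sum.cong) (use assms in \<open>auto simp: Rsub_def states_def\<close>)
  then show ?thesis
    unfolding mmult_def qmult_def using sum_states_delta[of "u[p := b]" L] assms
    by (cases b) (auto simp: UNIV_bool)
qed

lemma tau_lead_eq:
  "length s = L \<Longrightarrow> tau_lead g L mu k a b s u =
     (if a = b \<and> s = u then \<Prod>i<k. lead_weight g (- mu (Suc i)) a (s ! i) else 0)"
proof (induction k arbitrary: a b)
  case 0
  then show ?case by (simp add: mid_def qid_def)
next
  case (Suc k)
  have "tau_lead g L mu (Suc k) a b s u = lead_weight g (- mu (Suc k)) a (s ! k) * tau_lead g L mu k a b s u"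
    unfolding tau_lead.simps by (rule mmult_diag_left) (use Suc.prems in \<open>auto simp: Rlead_def\<close>)
  then show ?case
    using Suc by (simp add: mult.commute)
qed

lemma tbar_lead_eq:
  "length u = L \<Longrightarrow> tbar_lead g L mu k a b s u =
     (if a = b \<and> s = u then \<Prod>i<k. lead_weight g (mu (Suc i)) a (s ! i) else 0)"
proof (induction k arbitrary: a b)
  case 0
  then show ?case by (simp add: mid_def qid_def)
next
  case (Suc k)
  have "tbar_lead g L mu (Suc k) a b s u = tbar_lead g L mu k a b s u * lead_weight g (mu (Suc k)) b (u ! k)"
    unfolding tbar_lead.simps by (rule mmult_diag_right) (use Suc.prems in \<open>auto simp: Rlead_def\<close>)
  then show ?case
    using Suc by auto
qed

lemma prod_greaterThanLessThan_Suc: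
  "i < k \<Longrightarrow> (\<Prod>j\<in>{i<..<Suc k}. f j) = (\<Prod>j\<in>{i<..<k}. f j) * (f k :: 'a :: comm_monoid_mult)"
proof -
  assume "i < k"
  then have "{i<..<Suc k} = insert k {i<..<k}"
    by auto
  then show ?thesis
    by (simp add: mult.commute)
qed

lemma tau_sub_eq:
  assumes "k \<le> L" "length s = L" "length u = L"
  shows "tau_sub g L mu k False True s u =
    (\<Sum>i<k. if \<not> u ! i \<and> s = u[i := True] then
       2 * sinh g * (\<Prod>j<i. lead_weight g (- mu (Suc j)) True (u ! j))
         * (\<Prod>j\<in>{i<..<k}. lead_weight g (- mu (Suc j)) False (u ! j))
     else 0)"
  using assms(1)
proof (induction k)
  case 0
  then show ?case by (simp add: mzero_def)
next
  case (Suc k)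
  have k: "k < L" "k \<le> L"
    using Suc.prems by auto
  have flip: "s ! k \<and> s[k := False] = u \<longleftrightarrow> \<not> u ! k \<and> s = u[k := True]"
    using assms k by (auto simp: list_eq_iff_nth_eq nth_list_update)
  have new: "mmult L (Rsub g (Suc k)) (tau_lead g L mu k) False True s u =
     (if \<not> u ! k \<and> s = u[k := True]
      then 2 * sinh g * (\<Prod>j<k. lead_weight g (- mu (Suc j)) True (u ! j)) else 0)"
    unfolding mmult_Rsub_left[OF assms(2) k(1)] tau_lead_eq[OF length_list_update[of s k False, unfolded assms(2)]]
    using flip by auto
  have old: "mmult L (Rlead g (- mu (Suc k)) (Suc k)) (tau_sub g L mu k) False True s u =
      lead_weight g (- mu (Suc k)) False (s ! k) * tau_sub g L mu k False True s u"
    by (rule mmult_diag_left) (use assms in \<open>auto simp: Rlead_def\<close>)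
  have "lead_weight g (- mu (Suc k)) False (s ! k) * tau_sub g L mu k False True s u =
     (\<Sum>i<k. if \<not> u ! i \<and> s = u[i := True] then
       2 * sinh g * (\<Prod>j<i. lead_weight g (- mu (Suc j)) True (u ! j))
         * (\<Prod>j\<in>{i<..<Suc k}. lead_weight g (- mu (Suc j)) False (u ! j))
     else 0)"
    unfolding Suc.IH[OF k(2)] sum_distrib_left
    by (rule sum.cong) (auto simp: prod_greaterThanLessThan_Suc nth_list_update)
  moreover have "{k<..<Suc k} = {}"
    by auto
  ultimately show ?case
    unfolding tau_sub.simps madd_def new old by simp
qed

lemma tbar_sub_eq:
  assumes "k \<le> L" "length s = L" "length u = L"
  shows "tbar_sub g L mu k False True s u =
    (\<Sum>i<k. if \<not> u ! i \<and> s = u[i := True] then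
       2 * sinh g * (\<Prod>j<i. lead_weight g (mu (Suc j)) False (s ! j))
         * (\<Prod>j\<in>{i<..<k}. lead_weight g (mu (Suc j)) True (u ! j))
     else 0)"
  using assms(1)
proof (induction k)
  case 0
  then show ?case by (simp add: mzero_def)
next
  case (Suc k)
  have k: "k < L" "k \<le> L"
    using Suc.prems by auto
  have new: "mmult L (tbar_lead g L mu k) (Rsub g (Suc k)) False True s u =
     (if \<not> u ! k \<and> s = u[k := True]
      then 2 * sinh g * (\<Prod>j<k. lead_weight g (mu (Suc j)) False (s ! j)) else 0)"
    unfolding mmult_Rsub_right[OF assms(3) k(1)] tbar_lead_eq[OF length_list_update[of u k True, unfolded assms(3)]]
    by auto
  have old: "mmult L (tbar_sub g L mu k) (Rlead g (mu (Suc k)) (Suc k)) False True s u =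
      tbar_sub g L mu k False True s u * lead_weight g (mu (Suc k)) True (u ! k)"
    by (rule mmult_diag_right) (use assms in \<open>auto simp: Rlead_def\<close>)
  have "tbar_sub g L mu k False True s u * lead_weight g (mu (Suc k)) True (u ! k) =
     (\<Sum>i<k. if \<not> u ! i \<and> s = u[i := True] then
       2 * sinh g * (\<Prod>j<i. lead_weight g (mu (Suc j)) False (s ! j))
         * (\<Prod>j\<in>{i<..<Suc k}. lead_weight g (mu (Suc j)) True (u ! j))
     else 0)"
    unfolding Suc.IH[OF k(2)] sum_distrib_right
    by (rule sum.cong) (auto simp: prod_greaterThanLessThan_Suc)
  moreover have "{k<..<Suc k} = {}"
    by auto
  ultimately show ?case
    unfolding tbar_sub.simps madd_def new old by simp
qed

lemma T_sub_eq:
  assumes "length s = L" "length u = L"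
  shows "T_sub g h L mu False True s u =
      tau_sub g L mu L False True s u * - exp (- h) * (\<Prod>i<L. lead_weight g (mu (Suc i)) True (u ! i))
    + (\<Prod>i<L. lead_weight g (- mu (Suc i)) False (s ! i)) * exp h * tbar_sub g L mu L False True s u"
proof -
  have first: "mmult L (mmult L (tau_sub g L mu L) (Klead h)) (tbar_lead g L mu L) False True s u =
      mmult L (tau_sub g L mu L) (Klead h) False True s u * (\<Prod>i<L. lead_weight g (mu (Suc i)) True (u ! i))"
    by (rule mmult_diag_right) (use assms in \<open>auto simp: tbar_lead_eq\<close>)
  have "mmult L (tau_sub g L mu L) (Klead h) False True s u = tau_sub g L mu L False True s u * - exp (- h)"
    by (rule mmult_diag_right) (use assms in \<open>auto simp: Klead_def qid_def\<close>)
  moreover have "mmult L (mmult L (tau_lead g L mu L) (Klead h)) (tbar_sub g L mu L) False True s u =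
     (\<Prod>i<L. lead_weight g (- mu (Suc i)) False (s ! i)) * exp h * tbar_sub g L mu L False True s u"
  proof (rule mmult_diag_left)
    fix c v
    have "mmult L (tau_lead g L mu L) (Klead h) False c s v =
        (\<Prod>i<L. lead_weight g (- mu (Suc i)) False (s ! i)) * Klead h False c s v"
      by (rule mmult_diag_left) (use assms in \<open>auto simp: tau_lead_eq\<close>)
    then show "mmult L (tau_lead g L mu L) (Klead h) False c s v =
        (if c = False \<and> v = s then (\<Prod>i<L. lead_weight g (- mu (Suc i)) False (s ! i)) * exp h else 0)"
      by (auto simp: Klead_def qid_def)
  qed (rule assms(1))
  ultimately show ?thesis
    unfolding T_sub_def madd_def first by simp
qed

text \<open>The weight of raising site i (counted from 0) from e_1 to e_2 when n of the sites left of it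
  are still in state e_1.\<close>

definition flip_weight :: "complex \<Rightarrow> complex \<Rightarrow> nat \<Rightarrow> (nat \<Rightarrow> complex) \<Rightarrow> nat \<Rightarrow> nat \<Rightarrow> complex" where
  "flip_weight g h L mu i n = (exp g - 1 / exp g) * exp g ^ (L - 1 - i) *
     (exp h * exp (- mu (Suc i)) * (exp g ^ 2) ^ n - exp (mu (Suc i)) / exp h * (exp g ^ 2) ^ (i - n))"

lemma lead_weight_opposite_mult:
  "lead_weight g (- x) a y * lead_weight g x a y = (if y = a then exp g ^ 2 else 1)"
  "lead_weight g (- x) False y * lead_weight g x True y = exp g"
  by (cases y; simp add: lead_weight_def exp_minus field_simps power2_eq_square)+

lemma prod_if_const:
  "(\<Prod>j<(i::nat). if P j then c else 1) = (c :: 'a :: comm_monoid_mult) ^ card {j. j < i \<and> P j}"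
proof -
  have "(\<Prod>j\<in>{j\<in>{..<i}. P j}. c) = (\<Prod>j<i. if P j then c else 1)"
    by (rule prod.inter_filter) simp
  moreover have "{j\<in>{..<i}. P j} = {j. j < i \<and> P j}"
    by auto
  ultimately show ?thesis
    by simp
qed

lemma card_below_complement:
  "card {j. j < i \<and> P j} = i - card {j. j < i \<and> \<not> P j}"
proof -
  have "{j. j < i \<and> P j} = {..<i} - {j. j < i \<and> \<not> P j}"
    by auto
  then show ?thesis
    by (simp add: card_Diff_subset subset_eq)
qed

lemma prod_lessThan_split:
  "p < (n::nat) \<Longrightarrow> (\<Prod>j<n. f j) = (\<Prod>j<p. f j) * f p * (\<Prod>j\<in>{p<..<n}. f j :: 'a :: comm_monoid_mult)"
proof -
  assume "p < n"
  then have "{..<n} = {..<p} \<union> ({p} \<union> {p<..<n})"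
    by auto
  moreover have "(\<Prod>j\<in>{..<p} \<union> ({p} \<union> {p<..<n}). f j) = (\<Prod>j<p. f j) * (\<Prod>j\<in>{p} \<union> {p<..<n}. f j)"
    by (rule prod.union_disjoint) auto
  moreover have "(\<Prod>j\<in>{p} \<union> {p<..<n}. f j) = f p * (\<Prod>j\<in>{p<..<n}. f j)"
    by (subst prod.union_disjoint) auto
  ultimately show ?thesis
    by (simp add: mult.assoc)
qed

definition rank_below :: "nat set \<Rightarrow> nat \<Rightarrow> nat" where
  "rank_below S i = card {j\<in>S. j < i}"

definition false_positions :: "nat \<Rightarrow> bool list \<Rightarrow> nat set" where
  "false_positions L u = {i. i < L \<and> \<not> u ! i}"

lemma rank_below_false_positions:
  "i < L \<Longrightarrow> rank_below (false_positions L u) i = card {j. j < i \<and> \<not> u ! j}"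
  unfolding rank_below_def false_positions_def by (metis (lifting) mem_Collect_eq order.strict_trans)

lemma T_sub_summand_eq:
  assumes i: "i < L" and l: "length u = L"
  shows "(if \<not> u ! i \<and> s = u[i := True]
          then 2 * sinh g * (\<Prod>j<i. lead_weight g (- mu (Suc j)) True (u ! j))
            * (\<Prod>j\<in>{i<..<L}. lead_weight g (- mu (Suc j)) False (u ! j)) else 0)
          * - exp (- h) * (\<Prod>i<L. lead_weight g (mu (Suc i)) True (u ! i))
        + (\<Prod>i<L. lead_weight g (- mu (Suc i)) False (s ! i)) * exp h
          * (if \<not> u ! i \<and> s = u[i := True]
             then 2 * sinh g * (\<Prod>j<i. lead_weight g (mu (Suc j)) False (s ! j))
               * (\<Prod>j\<in>{i<..<L}. lead_weight g (mu (Suc j)) True (u ! j)) else 0)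
      = (if \<not> u ! i \<and> s = u[i := True]
         then flip_weight g h L mu i (rank_below (false_positions L u) i) else 0)"
proof (cases "\<not> u ! i \<and> s = u[i := True]")
  case False
  show ?thesis
    unfolding if_not_P[OF False] by simp
next
  case True
  then have ui: "\<not> u ! i" and s: "s = u[i := True]"
    by auto
  define q where "q = exp g"
  define n where "n = card {j. j < i \<and> \<not> u ! j}"
  define P1 where "P1 = (\<Prod>j<i. lead_weight g (- mu (Suc j)) True (u ! j))"
  define P2 where "P2 = (\<Prod>j<i. lead_weight g (mu (Suc j)) True (u ! j))"
  define P3 where "P3 = (\<Prod>j\<in>{i<..<L}. lead_weight g (- mu (Suc j)) False (u ! j))"
  define P4 where "P4 = (\<Prod>j\<in>{i<..<L}. lead_weight g (mu (Suc j)) True (u ! j))"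
  define S1 where "S1 = (\<Prod>j<i. lead_weight g (- mu (Suc j)) False (s ! j))"
  define S2 where "S2 = (\<Prod>j<i. lead_weight g (mu (Suc j)) False (s ! j))"
  have s_nth: "j \<noteq> i \<Longrightarrow> s ! j = u ! j" for j
    using s by simp
  have "P1 * P2 = (\<Prod>j<i. if u ! j then q ^ 2 else 1)"
    unfolding P1_def P2_def prod.distrib[symmetric] lead_weight_opposite_mult q_def by simp
  then have P12: "P1 * P2 = (q ^ 2) ^ (i - n)"
    unfolding prod_if_const card_below_complement[of i "\<lambda>j. u ! j"] n_def .
  have "S1 * S2 = (\<Prod>j<i. if \<not> u ! j then q ^ 2 else 1)"
    unfolding S1_def S2_def prod.distrib[symmetric] lead_weight_opposite_mult
    by (rule prod.cong) (auto simp: s_nth q_def)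
  then have S12: "S1 * S2 = (q ^ 2) ^ n"
    unfolding prod_if_const n_def .
  have P34: "P3 * P4 = q ^ (L - 1 - i)"
    unfolding P3_def P4_def prod.distrib[symmetric] lead_weight_opposite_mult q_def by simp
  have split_u: "(\<Prod>j<L. lead_weight g (mu (Suc j)) True (u ! j)) = P2 * exp (mu (Suc i)) * P4"
    unfolding prod_lessThan_split[OF i] P2_def P4_def using ui by (simp add: lead_weight_def)
  have split_s: "(\<Prod>j<L. lead_weight g (- mu (Suc j)) False (s ! j)) = S1 * exp (- mu (Suc i)) * P3"
    unfolding prod_lessThan_split[OF i] S1_def P3_def using i l s
    by (auto simp: lead_weight_def s_nth intro!: prod.cong)
  have sinh: "2 * sinh g = q - 1 / q"
    by (simp add: sinh_field_def q_def exp_minus inverse_eq_divide)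
  have "2 * sinh g * P1 * P3 * - exp (- h) * (P2 * exp (mu (Suc i)) * P4)
      + S1 * exp (- mu (Suc i)) * P3 * exp h * (2 * sinh g * S2 * P4)
    = 2 * sinh g * - exp (- h) * exp (mu (Suc i)) * (P1 * P2) * (P3 * P4)
      + 2 * sinh g * exp h * exp (- mu (Suc i)) * (S1 * S2) * (P3 * P4)"
    by (simp add: algebra_simps)
  also have "\<dots> = flip_weight g h L mu i n"
  proof -
    have "q \<noteq> 0" "exp h \<noteq> 0"
      by (simp_all add: q_def)
    then show ?thesis
      unfolding P12 S12 P34 flip_weight_def sinh exp_minus q_def[symmetric] by (simp add: field_simps)
  qed
  finally show ?thesis
    unfolding if_P[OF True] rank_below_false_positions[OF i] split_u split_s
      n_def P1_def P2_def P3_def P4_def S1_def S2_def .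
qed

lemma Bcoeff_eq:
  assumes "length s = L" "length u = L"
  shows "Bcoeff g h L mu s u = (\<Sum>i<L. if \<not> u ! i \<and> s = u[i := True]
     then flip_weight g h L mu i (rank_below (false_positions L u) i) / 2 ^ (2 * L + 1) else 0)"
proof -
  have "T_sub g h L mu False True s u = (\<Sum>i<L. if \<not> u ! i \<and> s = u[i := True]
      then flip_weight g h L mu i (rank_below (false_positions L u) i) else 0)"
    unfolding T_sub_eq[OF assms] tau_sub_eq[OF le_refl assms] tbar_sub_eq[OF le_refl assms]
      sum_distrib_right sum_distrib_left sum.distrib[symmetric]
    by (rule sum.cong[OF refl], rule T_sub_summand_eq) (use assms in auto)
  then show ?thesis
    unfolding Bcoeff_def by (simp only: sum_divide_distrib) (intro sum.cong, auto)
qed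

lemma qmult_Bcoeff_eq:
  assumes "length u = L"
  shows "qmult L P (Bcoeff g h L mu) s u =
    (\<Sum>i\<in>false_positions L u. P s (u[i := True]) *
       (flip_weight g h L mu i (rank_below (false_positions L u) i) / 2 ^ (2 * L + 1)))"
proof -
  define V where "V i = flip_weight g h L mu i (rank_below (false_positions L u) i) / 2 ^ (2 * L + 1)" for i
  have "qmult L P (Bcoeff g h L mu) s u =
      (\<Sum>v\<in>states L. \<Sum>i<L. if \<not> u ! i \<and> v = u[i := True] then P s v * V i else 0)"
    unfolding qmult_def
  proof (rule sum.cong[OF refl])
    fix v assume "v \<in> states L"
    then have column: "Bcoeff g h L mu v u = (\<Sum>i<L. if \<not> u ! i \<and> v = u[i := True] then V i else 0)"
      unfolding V_def using Bcoeff_eq assms by (simp add: states_def)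
    show "P s v * Bcoeff g h L mu v u =
        (\<Sum>i<L. if \<not> u ! i \<and> v = u[i := True] then P s v * V i else 0)"
      unfolding column sum_distrib_left by (rule sum.cong) simp_all
  qed
  also have "\<dots> = (\<Sum>i<L. \<Sum>v\<in>states L. if \<not> u ! i \<and> v = u[i := True] then P s v * V i else 0)"
    by (rule sum.swap)
  also have "\<dots> = (\<Sum>i<L. if \<not> u ! i then P s (u[i := True]) * V i else 0)"
  proof (rule sum.cong[OF refl])
    fix i
    show "(\<Sum>v\<in>states L. if \<not> u ! i \<and> v = u[i := True] then P s v * V i else 0) =
        (if \<not> u ! i then P s (u[i := True]) * V i else 0)"
      using sum_states_delta[of "u[i := True]" L "\<lambda>v. P s v * V i"] assms by (cases "u ! i") simp_all
  qed
  also have "\<dots> = (\<Sum>i\<in>false_positions L u. P s (u[i := True]) * V i)"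
    unfolding false_positions_def by (subst sum.inter_filter[symmetric]) (auto intro: sum.cong)
  finally show ?thesis
    unfolding V_def .
qed

section \<open>Powers of the first-order B-operator\<close>

text \<open>Factorised form of the sum, over all orders of removing the elements of S, of the products
  of V i (number of smaller elements still present); rank_prod_remove is the recursion on the
  first removed element.\<close>

definition rank_prod :: "(nat \<Rightarrow> nat \<Rightarrow> 'a :: comm_semiring_1) \<Rightarrow> nat set \<Rightarrow> 'a" where
  "rank_prod V S = (\<Prod>i\<in>S. \<Sum>m\<le>rank_below S i. V i m)"

lemma rank_below_insert_max:
  assumes "\<forall>a\<in>A. a < b"
  shows "rank_below (insert b A) b = card A" and "i \<in> A \<Longrightarrow> rank_below (insert b A) i = rank_below A i"
proof -
  have "{j\<in>insert b A. j < b} = A"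
    using assms by auto
  then show "rank_below (insert b A) b = card A"
    unfolding rank_below_def by simp
  show "rank_below (insert b A) i = rank_below A i" if "i \<in> A"
  proof -
    have "{j\<in>insert b A. j < i} = {j\<in>A. j < i}"
      using assms that by auto
    then show ?thesis
      unfolding rank_below_def by simp
  qed
qed

lemma rank_prod_insert_max:
  assumes "finite A" and "\<forall>a\<in>A. a < b"
  shows "rank_prod V (insert b A) = (\<Sum>m\<le>card A. V b m) * rank_prod V A"
proof -
  have "b \<notin> A"
    using assms(2) by auto
  then show ?thesis
    unfolding rank_prod_def using assms by (simp add: rank_below_insert_max cong: prod.cong)
qed

lemma rank_prod_remove:
  assumes "finite S" and "S \<noteq> {}"
  shows "rank_prod V S = (\<Sum>i\<in>S. V i (rank_below S i) * rank_prod V (S - {i}))"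
  using assms
proof (induction S rule: finite_linorder_max_induct)
  case empty
  then show ?case by simp
next
  case (insert b A)
  have bA: "b \<notin> A"
    using insert.hyps by auto
  have A_less: "\<forall>a\<in>A - {i}. a < b" for i
    using insert.hyps by auto
  have remove_b: "V b (rank_below (insert b A) b) * rank_prod V (insert b A - {b}) = V b (card A) * rank_prod V A"
    using bA by (simp add: rank_below_insert_max insert.hyps)
  have remove_i: "V i (rank_below (insert b A) i) * rank_prod V (insert b A - {i}) =
      (\<Sum>m\<le>card A - 1. V b m) * (V i (rank_below A i) * rank_prod V (A - {i}))" if "i \<in> A" for i
  proof -
    have "insert b A - {i} = insert b (A - {i})"
      using that bA by auto
    then have "rank_prod V (insert b A - {i}) = (\<Sum>m\<le>card A - 1. V b m) * rank_prod V (A - {i})"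
      using rank_prod_insert_max[of "A - {i}" b V] A_less[of i] insert.hyps(1) that by simp
    then show ?thesis
      using that by (simp add: rank_below_insert_max insert.hyps mult_ac)
  qed
  have sum_split: "(\<Sum>i\<in>insert b A. V i (rank_below (insert b A) i) * rank_prod V (insert b A - {i})) =
      V b (card A) * rank_prod V A
      + (\<Sum>m\<le>card A - 1. V b m) * (\<Sum>i\<in>A. V i (rank_below A i) * rank_prod V (A - {i}))"
    unfolding sum.insert[OF insert.hyps(1) bA] remove_b sum_distrib_left
    by (intro arg_cong[where f="(+) _"] sum.cong refl remove_i)
  show ?case
  proof (cases "A = {}")
    case True
    then show ?thesis
      using rank_below_insert_max(1)[of A b] by (simp add: rank_prod_def)
  next
    case False
    then have "card A = Suc (card A - 1)"
      using insert.hyps(1) by (simp add: card_gt_0_iff)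
    then have "(\<Sum>m\<le>card A. V b m) = (\<Sum>m\<le>card A - 1. V b m) + V b (card A)"
      by (metis sum.atMost_Suc)
    then show ?thesis
      unfolding sum_split rank_prod_insert_max[OF insert.hyps(1,2)] insert.IH[OF False, symmetric]
      by (simp add: algebra_simps)
  qed
qed

lemma finite_false_positions: "finite (false_positions L u)"
  unfolding false_positions_def by simp

lemma false_positions_update:
  "i < L \<Longrightarrow> length u = L \<Longrightarrow> false_positions L (u[i := True]) = false_positions L u - {i}"
  unfolding false_positions_def by (auto simp: nth_list_update)

lemma qpow_Bcoeff_eq:
  assumes "length u = L"
  shows "qpow L (Bcoeff g h L mu) k (replicate L True) u =
    (if card (false_positions L u) = k
     then rank_prod (\<lambda>i m. flip_weight g h L mu i m / 2 ^ (2 * L + 1)) (false_positions L u) else 0)"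
  using assms
proof (induction k arbitrary: u)
  case 0
  have "false_positions L u = {} \<longleftrightarrow> replicate L True = u"
    using 0 by (auto simp: false_positions_def list_eq_iff_nth_eq)
  then show ?case
    by (auto simp: qid_def rank_prod_def card_eq_0_iff finite_false_positions)
next
  case (Suc k)
  define V where "V = (\<lambda>i m. flip_weight g h L mu i m / 2 ^ (2 * L + 1))"
  then have V_apply: "flip_weight g h L mu i m / 2 ^ (2 * L + 1) = V i m" for i m
    by simp
  define S where "S = false_positions L u"
  have "qpow L (Bcoeff g h L mu) (Suc k) (replicate L True) u =
      (\<Sum>i\<in>S. (if card (S - {i}) = k then rank_prod V (S - {i}) else 0) * V i (rank_below S i))"
    unfolding qpow.simps qmult_Bcoeff_eq[OF Suc.prems] S_def[symmetric] V_apply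
  proof (rule sum.cong[OF refl])
    fix i assume "i \<in> S"
    then have "i < L"
      by (simp add: S_def false_positions_def)
    then have "false_positions L (u[i := True]) = S - {i}"
      using Suc.prems by (simp add: false_positions_update S_def)
    then have "qpow L (Bcoeff g h L mu) k (replicate L True) (u[i := True]) =
        (if card (S - {i}) = k then rank_prod V (S - {i}) else 0)"
      using Suc.IH[of "u[i := True]"] Suc.prems unfolding V_def by simp
    then show "qpow L (Bcoeff g h L mu) k (replicate L True) (u[i := True]) * V i (rank_below S i) =
        (if card (S - {i}) = k then rank_prod V (S - {i}) else 0) * V i (rank_below S i)"
      by simp
  qed
  also have "\<dots> = (if card S = Suc k then rank_prod V S else 0)"
  proof (cases "card S = Suc k")
    case True
    have finite: "finite S"
      by (simp add: S_def finite_false_positions)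
    have "card (S - {i}) = k" if "i \<in> S" for i
      using True that finite by simp
    then have "(\<Sum>i\<in>S. (if card (S - {i}) = k then rank_prod V (S - {i}) else 0) * V i (rank_below S i)) =
        (\<Sum>i\<in>S. V i (rank_below S i) * rank_prod V (S - {i}))"
      by (intro sum.cong) (simp_all add: mult.commute)
    also have "\<dots> = rank_prod V S"
      using rank_prod_remove[OF finite, of V] True by force
    finally show ?thesis
      using True by simp
  next
    case False
    have "card (S - {i}) \<noteq> k" if "i \<in> S" for i
    proof -
      have "finite S"
        by (simp add: S_def finite_false_positions)
      then have "card (S - {i}) = card S - 1" and "card S > 0"
        using that by (auto simp: card_gt_0_iff)
      then show ?thesis
        using False by linarith
    qed
    then show ?thesis
      using False by simp
  qed
  finally show ?case
    unfolding S_def V_def .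
qed

lemma qpow_Bcoeff_domain_wall:
  "qpow L (Bcoeff g h L mu) L (replicate L True) (replicate L False) =
     (\<Prod>i<L. \<Sum>m\<le>i. flip_weight g h L mu i m / 2 ^ (2 * L + 1))"
proof -
  have positions: "false_positions L (replicate L False) = {..<L}"
    unfolding false_positions_def by auto
  have "rank_below {..<L} i = i" if "i < L" for i
  proof -
    have "{j\<in>{..<L}. j < i} = {..<i}"
      using that by auto
    then show ?thesis
      unfolding rank_below_def by simp
  qed
  then show ?thesis
    unfolding qpow_Bcoeff_eq[OF length_replicate] positions rank_prod_def by simp
qed

lemma sum_atMost_power_reverse: "(\<Sum>m\<le>i. (x::'a::comm_semiring_1) ^ (i - m)) = (\<Sum>m\<le>i. x ^ m)"
  using sum.nat_diff_reindex[of "\<lambda>m. x ^ m" "Suc i"] by (simp add: lessThan_Suc_atMost)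

lemma qpow_Bcoeff_closed_form:
  fixes L :: nat and g h :: complex and mu :: "nat \<Rightarrow> complex"
  defines "q \<equiv> exp g" and "t \<equiv> exp h"
  shows "qpow L (Bcoeff g h L mu) L (replicate L True) (replicate L False) =
     q ^ (L * (L - 1) div 2) / 2 ^ (L * (2 * L + 1)) * (q - 1 / q) ^ L
       * qfact (q ^ 2) L * (\<Prod>i=1..L. t * exp (- mu i) - exp (mu i) / t)"
proof -
  define D :: complex where "D = 2 ^ (2 * L + 1)"
  define X where "X i = t * exp (- mu (Suc i)) - exp (mu (Suc i)) / t" for i
  define G where "G i = (\<Sum>m\<le>i. (q ^ 2) ^ m)" for i
  have row: "(\<Sum>m\<le>i. flip_weight g h L mu i m / D) = (q - 1 / q) * q ^ (L - 1 - i) * X i * G i / D" for i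
  proof -
    have "(\<Sum>m\<le>i. flip_weight g h L mu i m) = (q - 1 / q) * q ^ (L - 1 - i) *
        (t * exp (- mu (Suc i)) * (\<Sum>m\<le>i. (q ^ 2) ^ m) - exp (mu (Suc i)) / t * (\<Sum>m\<le>i. (q ^ 2) ^ (i - m)))"
      unfolding flip_weight_def q_def t_def
      by (simp add: sum_distrib_left sum_subtractf right_diff_distrib mult.assoc)
    also have "\<dots> = (q - 1 / q) * q ^ (L - 1 - i) * X i * G i"
      unfolding sum_atMost_power_reverse X_def G_def by (simp add: algebra_simps)
    finally show ?thesis
      by (simp add: sum_divide_distrib[symmetric])
  qed
  have "qpow L (Bcoeff g h L mu) L (replicate L True) (replicate L False) =
      (\<Prod>i<L. (q - 1 / q) * q ^ (L - 1 - i) * X i * G i / D)"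
    unfolding qpow_Bcoeff_domain_wall D_def[symmetric] row ..
  also have "\<dots> = (q - 1 / q) ^ L * q ^ (\<Sum>i<L. L - 1 - i) * (\<Prod>i<L. X i) * (\<Prod>i<L. G i) / D ^ L"
    by (simp add: prod.distrib prod_dividef power_sum)
  also have "(\<Sum>i<L. L - 1 - i) = L * (L - 1) div 2"
  proof -
    have "(\<Sum>i<L. L - 1 - i) = (\<Sum>i<L. L - Suc i)"
      by simp
    also have "\<dots> = (\<Sum>i<L. i)"
      by (rule sum.nat_diff_reindex)
    also have "\<dots> = L * (L - 1) div 2"
      using Sum_Ico_nat[of 0 L] by (simp add: lessThan_atLeast0)
    finally show ?thesis .
  qed
  also have "(\<Prod>i<L. X i) = (\<Prod>i=1..L. t * exp (- mu i) - exp (mu i) / t)"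
    unfolding X_def using prod.atLeast1_atMost_eq[of "\<lambda>i. t * exp (- mu i) - exp (mu i) / t" L] by simp
  also have "(\<Prod>i<L. G i) = qfact (q ^ 2) L"
    unfolding qfact_def G_def using prod.atLeast1_atMost_eq[of "\<lambda>k. \<Sum>j<k. (q ^ 2) ^ j" L]
    by (simp add: lessThan_Suc_atMost)
  also have "D ^ L = 2 ^ (L * (2 * L + 1))"
    unfolding D_def by (simp add: power_mult[symmetric] mult.commute power_add)
  finally show ?thesis
    by (simp only: divide_inverse mult_ac)
qed

lemma tendsto_Zbar_normalized:
  "((\<lambda>lams. Zbar g h L mu lams / (\<Prod>i=1..L. exp (2 * lams i) ^ (2 * L)))
     \<longlongrightarrow> qpow L (Bcoeff g h L mu) L (replicate L True) (replicate L False)) (Re_all_at_top {1..L})"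
proof -
  have "Zbar g h L mu lams / (\<Prod>i=1..L. exp (2 * lams i) ^ (2 * L)) =
      Bprod g h L mu lams L (replicate L True) (replicate L False) / (\<Prod>i=1..L. exp (2 * lams i) ^ L)"
    for lams
  proof -
    have "(z::complex) ^ (2 * L) = z ^ L * z ^ L" for z
      by (simp only: mult_2 power_add)
    then have "(\<Prod>i=1..L. exp (2 * lams i) ^ (2 * L)) =
        (\<Prod>i=1..L. exp (2 * lams i) ^ L) * (\<Prod>i=1..L. exp (2 * lams i) ^ L)"
      by (simp only: prod.distrib)
    moreover have "P \<noteq> 0 \<Longrightarrow> Z * P / (P * P) = Z / P" for Z P :: complex
      by (simp add: field_simps)
    ultimately show ?thesis
      unfolding Zbar_def Zpf_def by simp
  qed
  then show ?thesis
    using tendsto_Bprod_normalized[OF le_refl] by simp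
qed

theorem lemma4:
  fixes L :: nat and g h :: complex and mu :: "nat \<Rightarrow> complex"
  defines "q \<equiv> exp g" and "t \<equiv> exp h"
  defines "C \<equiv> q ^ (L * (L - 1) div 2) / 2 ^ (L * (2 * L + 1)) * (q - 1 / q) ^ L
               * qfact (q ^ 2) L * (\<Prod>i=1..L. t * exp (- mu i) - exp (mu i) / t)"
  assumes "0 < L"
    and "C \<noteq> 0"
  shows "\<forall>\<epsilon>>0. \<exists>M. \<forall>lams :: nat \<Rightarrow> complex. (\<forall>i\<in>{1..L}. M \<le> Re (lams i)) \<longrightarrow>
           cmod (Zbar g h L mu lams / (C * (\<Prod>i=1..L. exp (2 * lams i) ^ (2 * L))) - 1) < \<epsilon>"
proof -
  have "qpow L (Bcoeff g h L mu) L (replicate L True) (replicate L False) = C"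
    unfolding C_def q_def t_def by (rule qpow_Bcoeff_closed_form)
  then have "((\<lambda>lams. Zbar g h L mu lams / (\<Prod>i=1..L. exp (2 * lams i) ^ (2 * L)) / C) \<longlongrightarrow> C / C)
      (Re_all_at_top {1..L})"
    using tendsto_Zbar_normalized[of g h L mu] by (intro tendsto_divide tendsto_const \<open>C \<noteq> 0\<close>) simp
  then have "((\<lambda>lams. Zbar g h L mu lams / (C * (\<Prod>i=1..L. exp (2 * lams i) ^ (2 * L)))) \<longlongrightarrow> 1)
      (Re_all_at_top {1..L})"
    using \<open>C \<noteq> 0\<close> by (simp add: mult.commute)
  then show ?thesis
    unfolding tendsto_iff eventually_Re_all_at_top dist_norm by simp
qed

end
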